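(* Let $\Bbbk$ be a field of characteristic zero, $\lambda\in\Bbbk^*$, and $s_\lambda=t+\lambda t^{-1}$. Then $$\mathcal O(\lambda)=L(s_\lambda)=\Bbbk[t+\lambda t^{-1}](t^2-\lambda)\partial=\Bbbk[s_\lambda](s_\lambda^2-4\lambda)\partial_{s_\lambda}\cong(t^2-4\lambda)\Bbbk[t]\partial,$$ where the isomorphism is induced by the change of variables $s_\lambda\mapsto t$. Consequently $\mathcal O(\lambda)$ has a basis $\{u^{(\lambda)}_n\mid n\ge1\}$, where $u^{(\lambda)}_n=-s_\lambda^{n-1}(s_\lambda^2-4\lambda)\partial_{s_\lambda}=-(t+\lambda t^{-1})^{n-1}(t^2-\lambda)\partial$, and $[u^{(\lambda)}_n,u^{(\lambda)}_m]=(n-m)(u^{(\lambda)}_{n+m}-4\lambda u^{(\lambda)}_{n+m-2})$ for all $n,m\ge1$.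
   Context: $\mathcal W=\Bbbk[t,t^{-1}]\partial$ with $\partial=d/dt$ is the Witt algebra, $L_n=-t^{n+1}\partial$, $[f\partial,g\partial]=(fg'-f'g)\partial$. For $\lambda\in\Bbbk^*$, $\mathcal O^{(\lambda)}_n=L_n-\lambda^nL_{-n}$ and $\mathcal O(\lambda)=\mathrm{span}\{\mathcal O^{(\lambda)}_n\mid n\ge1\}\subseteq\mathcal W$. For $s\in\Bbbk[t,t^{-1}]$ nonconstant, $\partial_s=\frac{1}{s'}\partial\in\mathrm{Der}(\Bbbk(t))$ (so $\partial_s(s)=1$), $\mathrm{Der}(\Bbbk[s])=\Bbbk[s]\partial_s$, and $L(s)=\mathcal W\cap\mathrm{Der}(\Bbbk[s])$, the intersection taken in $\mathrm{Der}(\Bbbk(t))$. $\Bbbk[t]\partial$ is the one-sided Witt algebra $\mathrm{Der}(\Bbbk[t])$. *)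

theory Defs
  imports "HOL-Computational_Algebra.Formal_Laurent_Series"
begin

text \<open>A derivation g d/dt of k(t) is represented by its coefficient g,
an element of the field of formal Laurent series k((t)) (which contains k(t)).
The Witt algebra W = k[t,t^-1] d/dt is the set of Laurent series with finite support.\<close>

definition laurent_poly :: "'a::field_char_0 fls \<Rightarrow> bool" where
  "laurent_poly f \<longleftrightarrow> finite {n. fls_nth f n \<noteq> 0}"

definition Witt :: "'a::field_char_0 fls set" where
  "Witt = {f. laurent_poly f}"

definition lie :: "'a::field_char_0 fls \<Rightarrow> 'a fls \<Rightarrow> 'a fls" where
  "lie f g = f * fls_deriv g - fls_deriv f * g"

definition peval :: "'a::field_char_0 poly \<Rightarrow> 'a fls \<Rightarrow> 'a fls" where
  "peval p s = poly (map_poly fls_const p) s"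

definition poly_fls :: "'a::field_char_0 poly \<Rightarrow> 'a fls" where
  "poly_fls p = fps_to_fls (fps_of_poly p)"

text \<open>Coefficient of the derivation d_s = (1/s') d/dt.\<close>
definition dcoef :: "'a::field_char_0 fls \<Rightarrow> 'a fls" where
  "dcoef s = 1 / fls_deriv s"

text \<open>Der(k[s]) = k[s] d_s, viewed inside Der(k(t)).\<close>
definition Der_poly :: "'a::field_char_0 fls \<Rightarrow> 'a fls set" where
  "Der_poly s = {peval p s * dcoef s | p. True}"

definition Lsub :: "'a::field_char_0 fls \<Rightarrow> 'a fls set" where
  "Lsub s = Witt \<inter> Der_poly s"

definition Lw :: "int \<Rightarrow> 'a::field_char_0 fls" where
  "Lw n = - fls_X_intpow (n + 1)"

definition Ogen :: "'a::field_char_0 \<Rightarrow> nat \<Rightarrow> 'a fls" where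
  "Ogen lam n = Lw (int n) - fls_const (lam ^ n) * Lw (- int n)"

definition kspan :: "(nat \<Rightarrow> 'a::field_char_0 fls) \<Rightarrow> 'a fls set" where
  "kspan v = {\<Sum>n\<in>S. fls_const (c n) * v n | S c. finite S \<and> 0 \<notin> S}"

definition kindep :: "(nat \<Rightarrow> 'a::field_char_0 fls) \<Rightarrow> bool" where
  "kindep v \<longleftrightarrow> (\<forall>S c. finite S \<and> 0 \<notin> S \<and> (\<Sum>n\<in>S. fls_const (c n) * v n) = 0
                      \<longrightarrow> (\<forall>n\<in>S. c n = 0))"

definition Ocal :: "'a::field_char_0 \<Rightarrow> 'a fls set" where
  "Ocal lam = kspan (Ogen lam)"

definition slam :: "'a::field_char_0 \<Rightarrow> 'a fls" where
  "slam lam = fls_X + fls_const lam * fls_X_inv"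

definition ugen :: "'a::field_char_0 \<Rightarrow> nat \<Rightarrow> 'a fls" where
  "ugen lam n = - (slam lam ^ (n - 1) * (slam lam ^ 2 - fls_const (4 * lam)) * dcoef (slam lam))"

end

theory Submission
  imports Defs
begin

text \<open>Put s = t + \<lambda>t^-1 and w = t - \<lambda>t^-1. Then t s' = w, s^2 - 4\<lambda> = w^2 and
  t^2 - \<lambda> = t w, so (s^2 - 4\<lambda>) d/ds = (t^2 - \<lambda>) d/dt. Since O_1 = -(t^2 - \<lambda>) d/dt and
  s O_n = O_(n+1) + \<lambda> O_(n-1), the span O(\<lambda>) is k[s](t^2 - \<lambda>) d/dt.
  Conversely, if p(s) d/ds lies in W, divide p by s^2 - 4\<lambda>: the remainder a s + b gives
  (a s + b) t/w d/dt, and comparing the extreme coefficients of g (t^2 - \<lambda>) = (a s + b) t^2 for a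
  Laurent polynomial g forces a = b = 0. As s has a pole at 0, p \<mapsto> p(s) is injective, so
  p(s) d/ds \<mapsto> p(t) d/dt is a Lie algebra isomorphism Der k[s] \<cong> Der k[t]; it sends u_n to
  -t^(n-1) (t^2 - 4\<lambda>) d/dt, where the bracket relation is a polynomial identity.\<close>

unbundle fps_syntax

section \<open>Polynomials evaluated at a Laurent series\<close>

lemma peval_pCons: "peval (pCons a p) s = fls_const a + s * peval p s"
  by (simp add: peval_def map_poly_pCons)

lemma peval_0 [simp]: "peval 0 s = 0"
  by (simp add: peval_def)

lemma peval_add: "peval (p + q) s = peval p s + peval q s"
  by (induct p q rule: poly_induct2) (simp_all add: peval_pCons algebra_simps flip: fls_plus_const)

lemma peval_smult: "peval (smult c p) s = fls_const c * peval p s"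
  by (simp add: peval_def map_poly_smult)

lemma peval_mult: "peval (p * q) s = peval p s * peval q s"
  by (induct p) (simp_all add: peval_pCons peval_add peval_smult algebra_simps)

lemma peval_uminus: "peval (- p) s = - peval p s"
  using peval_smult [of "- 1" p s] by simp

lemma peval_diff: "peval (p - q) s = peval p s - peval q s"
  using peval_add [of p "- q" s] by (simp add: peval_uminus)

lemma peval_monom: "peval (monom c n) s = fls_const c * s ^ n"
  by (simp add: peval_def map_poly_monom poly_monom)

lemma peval_sum: "peval (\<Sum>i\<in>I. p i) s = (\<Sum>i\<in>I. peval (p i) s)"
  by (induct I rule: infinite_finite_induct) (simp_all add: peval_add)

lemma fls_deriv_peval: "fls_deriv (peval p s) = peval (pderiv p) s * fls_deriv s"
  by (induct p) (simp_all add: peval_pCons pderiv_pCons peval_add algebra_simps)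

lemma peval_nonzero_fls_subdegree:
  assumes "fls_subdegree s < 0" "p \<noteq> 0"
  shows "peval p s \<noteq> 0 \<and> fls_subdegree (peval p s) = int (degree p) * fls_subdegree s"
  using assms(2)
proof (induct p)
  case (pCons a p)
  show ?case
  proof (cases "p = 0")
    case True
    with pCons show ?thesis by (simp add: peval_pCons)
  next
    case False
    with pCons have IH: "peval p s \<noteq> 0" "fls_subdegree (peval p s) = int (degree p) * fls_subdegree s"
      by auto
    have s: "s \<noteq> 0" using assms(1) by auto
    have lowest: "fls_subdegree (s * peval p s) = int (degree (pCons a p)) * fls_subdegree s"
      using IH s False by (simp add: algebra_simps)
    also have "\<dots> < fls_subdegree (fls_const a)"
      using assms(1) False by (simp add: mult_pos_neg)
    finally have "fls_subdegree (peval (pCons a p) s) = int (degree (pCons a p)) * fls_subdegree s"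
      using IH s lowest by (simp add: peval_pCons fls_subdegree_add_eq2)
    moreover from this have "peval (pCons a p) s \<noteq> 0"
      using assms(1) False by (auto simp: mult_less_0_iff)
    ultimately show ?thesis by blast
  qed
qed simp

lemma peval_eq_0_iff: "fls_subdegree s < 0 \<Longrightarrow> peval p s = 0 \<longleftrightarrow> p = 0"
  using peval_nonzero_fls_subdegree by fastforce

section \<open>The derivations p(s) d/ds and the change of variables s to t\<close>

definition sder :: "'a::field_char_0 fls \<Rightarrow> 'a poly \<Rightarrow> 'a fls" where
  "sder s p = peval p s * dcoef s"

lemma Der_poly_eq_range_sder: "Der_poly s = range (sder s)"
  by (auto simp: Der_poly_def sder_def)

lemma sder_0 [simp]: "sder s 0 = 0"
  by (simp add: sder_def)

lemma sder_add: "sder s (p + q) = sder s p + sder s q"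
  by (simp add: sder_def peval_add distrib_right)

lemma sder_diff: "sder s (p - q) = sder s p - sder s q"
  by (simp add: sder_def peval_diff left_diff_distrib)

lemma sder_smult: "sder s (smult c p) = fls_const c * sder s p"
  by (simp add: sder_def peval_smult mult.assoc)

lemma inj_sder:
  assumes "fls_subdegree s < 0" "fls_deriv s \<noteq> 0"
  shows "inj (sder s)"
proof (rule injI)
  fix p q assume "sder s p = sder s q"
  then have "peval (p - q) s = 0"
    using assms(2) by (simp add: sder_def dcoef_def peval_diff)
  then show "p = q"
    using assms(1) by (simp add: peval_eq_0_iff)
qed

lemma lie_sder:
  assumes "fls_deriv s \<noteq> 0"
  shows "lie (sder s p) (sder s q) = sder s (p * pderiv q - pderiv p * q)"
proof -
  have "fls_deriv s * dcoef s = 1"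
    using assms by (simp add: dcoef_def)
  then have "fls_deriv (sder s r) = peval (pderiv r) s + peval r s * fls_deriv (dcoef s)" for r
    unfolding sder_def fls_deriv_mult fls_deriv_peval mult.assoc by simp
  then show ?thesis
    by (simp add: lie_def sder_def peval_diff peval_mult algebra_simps)
qed

lemma poly_fls_add: "poly_fls (p + q) = poly_fls p + poly_fls q"
  by (simp add: poly_fls_def fps_of_poly_add)

lemma poly_fls_smult: "poly_fls (smult c p) = fls_const c * poly_fls p"
  by (simp add: poly_fls_def fps_of_poly_smult fls_times_fps_to_fls)

lemma inj_poly_fls: "inj poly_fls"
  by (rule injI) (simp add: poly_fls_def fps_of_poly_eq_iff)

lemma lie_poly_fls: "lie (poly_fls p) (poly_fls q) = poly_fls (p * pderiv q - pderiv p * q)"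
  by (simp add: lie_def poly_fls_def fls_deriv_fps_to_fls fps_of_poly_pderiv
      fps_of_poly_diff fps_of_poly_mult fls_times_fps_to_fls)

definition sder_to_poly :: "'a::field_char_0 fls \<Rightarrow> 'a fls \<Rightarrow> 'a fls" where
  "sder_to_poly s f = poly_fls (the_inv (sder s) f)"

context
  fixes s :: "'a::field_char_0 fls"
  assumes inj: "inj (sder s)"
begin

lemma sder_to_poly_sder: "sder_to_poly s (sder s p) = poly_fls p"
  by (simp add: sder_to_poly_def the_inv_f_f [OF inj])

lemma bij_betw_sder_to_poly: "bij_betw (sder_to_poly s) (sder s ` P) (poly_fls ` P)"
proof (rule bij_betw_imageI)
  show "inj_on (sder_to_poly s) (sder s ` P)"
    by (auto intro!: inj_onI simp: sder_to_poly_sder inj_eq [OF inj_poly_fls])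
qed (simp add: image_image sder_to_poly_sder)

lemma sder_to_poly_add:
  "f \<in> range (sder s) \<Longrightarrow> g \<in> range (sder s) \<Longrightarrow>
     sder_to_poly s (f + g) = sder_to_poly s f + sder_to_poly s g"
  by (auto simp flip: sder_add simp: sder_to_poly_sder poly_fls_add)

lemma sder_to_poly_smult:
  "f \<in> range (sder s) \<Longrightarrow> sder_to_poly s (fls_const c * f) = fls_const c * sder_to_poly s f"
  by (auto simp flip: sder_smult simp: sder_to_poly_sder poly_fls_smult)

lemma sder_to_poly_lie:
  "fls_deriv s \<noteq> 0 \<Longrightarrow> f \<in> range (sder s) \<Longrightarrow> g \<in> range (sder s) \<Longrightarrow>
     sder_to_poly s (lie f g) = lie (sder_to_poly s f) (sder_to_poly s g)"
  by (auto simp: lie_sder sder_to_poly_sder lie_poly_fls)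

end

definition Tlam :: "'a::field_char_0 \<Rightarrow> 'a fls" where
  "Tlam lam = fls_X ^ 2 - fls_const lam"

definition wlam :: "'a::field_char_0 \<Rightarrow> 'a fls" where
  "wlam lam = fls_X - fls_const lam * fls_X_inv"

abbreviation quad :: "'a::field_char_0 \<Rightarrow> 'a poly" where
  "quad lam \<equiv> [:- 4 * lam, 0, 1:]"

lemma fls_X_mult_X_inv: "fls_X * fls_X_inv = (1 :: 'a::field fls)"
  by (simp add: fls_inverse_X [symmetric])

lemma Tlam_eq: "Tlam lam = fls_X * wlam lam"
  by (simp add: Tlam_def wlam_def right_diff_distrib mult.left_commute [of fls_X]
      fls_X_mult_X_inv power2_eq_square)

lemma fls_X_mult_deriv_slam: "fls_X * fls_deriv (slam lam) = wlam lam"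
  by (simp add: slam_def wlam_def power2_eq_square right_diff_distrib mult.left_commute [of fls_X]
      fls_X_mult_X_inv)

lemma peval_quad: "peval (quad lam) s = s ^ 2 - fls_const (4 * lam)"
  by (simp add: peval_pCons power2_eq_square)

lemma sder_mult_quad:
  "sder s (p * quad lam) = peval p s * (s ^ 2 - fls_const (4 * lam)) * dcoef s"
  unfolding sder_def peval_mult peval_quad ..

lemma slam_square_minus: "slam lam ^ 2 - fls_const (4 * lam) = wlam lam ^ 2"
proof -
  have "slam lam ^ 2 - fls_const (4 * lam) - wlam lam ^ 2 = 4 * fls_const lam * (fls_X * fls_X_inv - 1)"
    unfolding slam_def wlam_def power2_eq_square by (simp add: algebra_simps flip: fls_const_mult_const)
  then show ?thesis
    by (simp add: fls_X_mult_X_inv)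
qed

lemma wlam_nonzero: "lam \<noteq> 0 \<Longrightarrow> wlam lam \<noteq> 0"
  by (rule fls_nonzeroI [of _ "-1"]) (simp add: wlam_def)

lemma Tlam_nonzero: "lam \<noteq> 0 \<Longrightarrow> Tlam lam \<noteq> 0"
  by (simp add: Tlam_eq wlam_nonzero)

lemma fls_deriv_slam_nonzero: "lam \<noteq> 0 \<Longrightarrow> fls_deriv (slam lam) \<noteq> 0"
  by (metis fls_X_mult_deriv_slam mult_zero_right wlam_nonzero)

lemma fls_subdegree_slam: "lam \<noteq> 0 \<Longrightarrow> fls_subdegree (slam lam) = -1"
  unfolding slam_def by (subst fls_subdegree_add_eq2) simp_all

lemma dcoef_slam: "dcoef (slam lam) = fls_X / wlam lam"
  unfolding dcoef_def fls_X_mult_deriv_slam [symmetric] by simp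

lemma slam_square_minus_mult_dcoef:
  "lam \<noteq> 0 \<Longrightarrow> (slam lam ^ 2 - fls_const (4 * lam)) * dcoef (slam lam) = Tlam lam"
  unfolding slam_square_minus dcoef_slam Tlam_eq using wlam_nonzero [of lam]
  by (simp add: power2_eq_square)

lemma sder_slam_mult_quad:
  "lam \<noteq> 0 \<Longrightarrow> sder (slam lam) (p * quad lam) = peval p (slam lam) * Tlam lam"
  unfolding sder_mult_quad mult.assoc by (simp add: slam_square_minus_mult_dcoef)

lemma inj_sder_slam: "lam \<noteq> 0 \<Longrightarrow> inj (sder (slam lam))"
  by (rule inj_sder) (simp_all add: fls_subdegree_slam fls_deriv_slam_nonzero)

definition fls_subspace :: "'a::field_char_0 fls set \<Rightarrow> bool" where
  "fls_subspace V \<longleftrightarrow>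
    0 \<in> V \<and> (\<forall>f\<in>V. \<forall>g\<in>V. f + g \<in> V) \<and> (\<forall>c. \<forall>f\<in>V. fls_const c * f \<in> V)"

lemma fls_subspaceI:
  "0 \<in> V \<Longrightarrow> (\<And>f g. f \<in> V \<Longrightarrow> g \<in> V \<Longrightarrow> f + g \<in> V) \<Longrightarrow>
    (\<And>c f. f \<in> V \<Longrightarrow> fls_const c * f \<in> V) \<Longrightarrow> fls_subspace V"
  by (simp add: fls_subspace_def)

lemma fls_subspace_add: "fls_subspace V \<Longrightarrow> f \<in> V \<Longrightarrow> g \<in> V \<Longrightarrow> f + g \<in> V"
  by (simp add: fls_subspace_def)

lemma fls_subspace_smult: "fls_subspace V \<Longrightarrow> f \<in> V \<Longrightarrow> fls_const c * f \<in> V"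
  by (simp add: fls_subspace_def)

lemma fls_subspace_diff: "fls_subspace V \<Longrightarrow> f \<in> V \<Longrightarrow> g \<in> V \<Longrightarrow> f - g \<in> V"
  using fls_subspace_add [of V f "fls_const (- 1) * g"] fls_subspace_smult [of V g "- 1"] by simp

lemma fls_subspace_sum:
  "fls_subspace V \<Longrightarrow> (\<And>i. i \<in> I \<Longrightarrow> f i \<in> V) \<Longrightarrow> (\<Sum>i\<in>I. fls_const (c i) * f i) \<in> V"
  by (induct I rule: infinite_finite_induct) (auto simp: fls_subspace_def)

lemma peval_mult_in_subspace:
  assumes "fls_subspace V" "g \<in> V" "\<And>f. f \<in> V \<Longrightarrow> s * f \<in> V"
  shows "peval p s * g \<in> V"
proof (induct p)
  case (pCons a p)
  have "peval (pCons a p) s * g = fls_const a * g + s * (peval p s * g)"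
    by (simp add: peval_pCons algebra_simps)
  with pCons assms show ?case
    by (simp add: fls_subspace_def)
qed (use assms in \<open>simp add: fls_subspace_def\<close>)

lemma kspanI: "finite S \<Longrightarrow> 0 \<notin> S \<Longrightarrow> (\<Sum>n\<in>S. fls_const (c n) * v n) \<in> kspan v"
  unfolding kspan_def by blast

lemma kspan_gen: "n \<ge> 1 \<Longrightarrow> v n \<in> kspan v"
  using kspanI [of "{n}" "\<lambda>_. 1" v] by simp

lemma fls_subspace_kspan: "fls_subspace (kspan v)"
proof (rule fls_subspaceI)
  show "0 \<in> kspan v"
    using kspanI [of "{}"] by simp
next
  fix f g assume "f \<in> kspan v" "g \<in> kspan v"
  then obtain S c S' c' where S: "finite S" "0 \<notin> S" "f = (\<Sum>n\<in>S. fls_const (c n) * v n)"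
    and S': "finite S'" "0 \<notin> S'" "g = (\<Sum>n\<in>S'. fls_const (c' n) * v n)"
    unfolding kspan_def by blast
  define d where "d n = (if n \<in> S then c n else 0) + (if n \<in> S' then c' n else 0)" for n
  have "f = (\<Sum>n\<in>S \<union> S'. fls_const (if n \<in> S then c n else 0) * v n)"
    "g = (\<Sum>n\<in>S \<union> S'. fls_const (if n \<in> S' then c' n else 0) * v n)"
    unfolding S(3) S'(3) using S(1) S'(1) by (auto intro!: sum.mono_neutral_cong_left)
  then have "f + g = (\<Sum>n\<in>S \<union> S'. fls_const (d n) * v n)"
    by (simp add: d_def sum.distrib distrib_right flip: fls_plus_const)
  then show "f + g \<in> kspan v"
    using S S' kspanI [of "S \<union> S'" d v] by simp
next
  fix a f assume "f \<in> kspan v"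
  then obtain S c where S: "finite S" "0 \<notin> S" "f = (\<Sum>n\<in>S. fls_const (c n) * v n)"
    unfolding kspan_def by blast
  then have "fls_const a * f = (\<Sum>n\<in>S. fls_const (a * c n) * v n)"
    by (simp add: sum_distrib_left flip: mult.assoc)
  then show "fls_const a * f \<in> kspan v"
    using S kspanI [of S "\<lambda>n. a * c n" v] by simp
qed

lemma kspan_subset:
  assumes "fls_subspace W" "\<And>n. n \<ge> 1 \<Longrightarrow> v n \<in> W"
  shows "kspan v \<subseteq> W"
proof
  fix f assume "f \<in> kspan v"
  then obtain S c where "0 \<notin> S" "f = (\<Sum>n\<in>S. fls_const (c n) * v n)"
    unfolding kspan_def by blast
  with assms show "f \<in> W"
    by (metis fls_subspace_sum less_one not_le)
qed

lemma kspan_mult_closed: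
  assumes "\<And>n. n \<ge> 1 \<Longrightarrow> h * v n \<in> kspan v" "f \<in> kspan v"
  shows "h * f \<in> kspan v"
proof -
  have "fls_subspace {f. h * f \<in> kspan v}"
    using fls_subspace_kspan [of v]
    by (auto simp: fls_subspace_def distrib_left mult.left_commute [of h])
  with assms show ?thesis
    using kspan_subset [of "{f. h * f \<in> kspan v}" v] by auto
qed

section \<open>O(\<lambda>) = k[s_\<lambda>](t^2 - \<lambda>) d/dt\<close>

lemma fls_subspace_Witt: "fls_subspace Witt"
proof (rule fls_subspaceI)
  fix f g :: "'a fls" assume "f \<in> Witt" "g \<in> Witt"
  then show "f + g \<in> Witt"
    unfolding Witt_def laurent_poly_def
    by (auto intro: finite_subset [of _ "{n. f $$ n \<noteq> 0} \<union> {n. g $$ n \<noteq> 0}"])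
qed (auto simp: Witt_def laurent_poly_def elim: rev_finite_subset)

lemma fls_shift_1_in_Witt: "fls_shift k 1 \<in> Witt"
  unfolding Witt_def laurent_poly_def by (auto intro: finite_subset [of _ "{- k}"])

lemma Ogen_eq: "Ogen lam n = fls_const (lam ^ n) * fls_shift (int n - 1) 1 - fls_shift (- int n - 1) 1"
  by (simp add: Ogen_def Lw_def)

lemma Ogen_in_Witt: "Ogen lam n \<in> Witt"
  unfolding Ogen_eq
  by (intro fls_subspace_diff fls_subspace_smult fls_subspace_Witt fls_shift_1_in_Witt)

lemma Ocal_subset_Witt: "Ocal lam \<subseteq> Witt"
  unfolding Ocal_def by (intro kspan_subset fls_subspace_Witt Ogen_in_Witt)

lemma Ogen_0: "Ogen lam 0 = 0"
  by (simp add: Ogen_eq)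

lemma Ogen_Suc_0: "Ogen lam (Suc 0) = - Tlam lam"
  by (simp add: Ogen_eq Tlam_def fls_X_conv_shift_1 power2_eq_square fls_shifted_times_simps)

lemma slam_mult_Ogen:
  "slam lam * Ogen lam (Suc n) = Ogen lam (Suc (Suc n)) + fls_const lam * Ogen lam n"
proof -
  have "slam lam = fls_shift (-1) 1 + fls_const lam * fls_shift 1 1"
    by (simp add: slam_def fls_X_conv_shift_1 fls_X_inv_conv_shift_1)
  then show ?thesis
    by (simp add: Ogen_eq algebra_simps fls_shifted_times_simps) (simp add: minus_diff_commute)
qed

definition ksT :: "'a::field_char_0 \<Rightarrow> 'a fls set" where
  "ksT lam = {peval p (slam lam) * Tlam lam | p. True}"

lemma ksTI: "f = peval p (slam lam) * Tlam lam \<Longrightarrow> f \<in> ksT lam"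
  unfolding ksT_def by blast

lemma fls_subspace_ksT: "fls_subspace (ksT lam)"
proof (rule fls_subspaceI)
  show "0 \<in> ksT lam"
    by (rule ksTI [of _ 0]) simp
  show "f + g \<in> ksT lam" if fg: "f \<in> ksT lam" "g \<in> ksT lam" for f g
  proof -
    obtain p q where "f = peval p (slam lam) * Tlam lam" "g = peval q (slam lam) * Tlam lam"
      using fg unfolding ksT_def by blast
    then show ?thesis
      by (intro ksTI [of _ "p + q"]) (simp add: peval_add distrib_right)
  qed
  show "fls_const c * f \<in> ksT lam" if f: "f \<in> ksT lam" for c f
  proof -
    obtain p where "f = peval p (slam lam) * Tlam lam"
      using f unfolding ksT_def by blast
    then show ?thesis
      by (intro ksTI [of _ "smult c p"]) (simp add: peval_smult mult.assoc)
  qed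
qed

lemma Tlam_in_ksT: "Tlam lam \<in> ksT lam"
  by (rule ksTI [of _ 1]) (simp add: peval_pCons one_pCons)

lemma slam_mult_ksT:
  assumes "f \<in> ksT lam"
  shows "slam lam * f \<in> ksT lam"
proof -
  obtain p where "f = peval p (slam lam) * Tlam lam"
    using assms by (auto simp: ksT_def)
  then show ?thesis
    by (intro ksTI [of _ "[:0, 1:] * p"]) (simp add: peval_mult peval_pCons mult.assoc)
qed

lemma ksT_subset:
  "fls_subspace V \<Longrightarrow> Tlam lam \<in> V \<Longrightarrow> (\<And>f. f \<in> V \<Longrightarrow> slam lam * f \<in> V) \<Longrightarrow>
    ksT lam \<subseteq> V"
  unfolding ksT_def using peval_mult_in_subspace by blast

lemma Ogen_in_ksT: "Ogen lam n \<in> ksT lam"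
proof (induct n rule: induct_nat_012)
  case 0
  show ?case
    using fls_subspace_ksT [of lam] by (simp add: Ogen_0 fls_subspace_def)
next
  case 1
  show ?case
    using fls_subspace_smult [OF fls_subspace_ksT Tlam_in_ksT, of "- 1"] by (simp add: Ogen_Suc_0)
next
  case (ge2 n)
  have "Ogen lam (Suc (Suc n)) = slam lam * Ogen lam (Suc n) - fls_const lam * Ogen lam n"
    by (simp add: slam_mult_Ogen)
  with ge2 show ?case
    by (simp add: fls_subspace_diff fls_subspace_smult fls_subspace_ksT slam_mult_ksT)
qed

lemma Ogen_in_Ocal: "Ogen lam n \<in> Ocal lam"
  using kspan_gen [of n "Ogen lam"] fls_subspace_kspan [of "Ogen lam"]
  by (cases n) (auto simp: Ocal_def Ogen_0 fls_subspace_def)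

lemma slam_mult_Ocal: "f \<in> Ocal lam \<Longrightarrow> slam lam * f \<in> Ocal lam"
  unfolding Ocal_def
proof (rule kspan_mult_closed)
  fix n :: nat assume "n \<ge> 1"
  then have "slam lam * Ogen lam n = Ogen lam (Suc n) + fls_const lam * Ogen lam (n - 1)"
    using slam_mult_Ogen [of lam "n - 1"] by simp
  also have "\<dots> \<in> Ocal lam"
    using Ogen_in_Ocal fls_subspace_kspan unfolding Ocal_def
    by (intro fls_subspace_add fls_subspace_smult)
  finally show "slam lam * Ogen lam n \<in> kspan (Ogen lam)"
    by (simp add: Ocal_def)
qed

lemma Ocal_eq_ksT: "Ocal lam = ksT lam"
proof
  show "Ocal lam \<subseteq> ksT lam"
    unfolding Ocal_def by (intro kspan_subset fls_subspace_ksT Ogen_in_ksT)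
  have "fls_const (- 1) * Ogen lam 1 \<in> Ocal lam"
    unfolding Ocal_def by (intro fls_subspace_smult fls_subspace_kspan kspan_gen) simp
  then have "Tlam lam \<in> Ocal lam"
    by (simp add: Ogen_Suc_0)
  then show "ksT lam \<subseteq> Ocal lam"
    using fls_subspace_kspan slam_mult_Ocal unfolding Ocal_def
    by (intro ksT_subset) simp_all
qed

section \<open>L(s_\<lambda>) = k[s_\<lambda>](t^2 - \<lambda>) d/dt\<close>

lemma fls_nth_mult_Tlam: "(g * Tlam lam) $$ n = g $$ (n - 2) - lam * g $$ n"
  by (simp add: Tlam_def right_diff_distrib fls_X_power_times_conv_shift)

text \<open>The top coefficient g_M of g reappears as the coefficient of t^(M+2) in g (t^2 - \<lambda>);
  dually, for \<lambda> \<noteq> 0 the bottom one reappears as - \<lambda> g_m.\<close>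

lemma laurent_poly_mult_Tlam_vanishing_above:
  assumes g: "laurent_poly g" and above: "\<And>n. n > k \<Longrightarrow> (g * Tlam lam) $$ n = 0"
    and n: "n > k - 2"
  shows "g $$ n = 0"
proof (rule ccontr)
  assume "g $$ n \<noteq> 0"
  define B where "B = {n. g $$ n \<noteq> 0 \<and> n > k - 2}"
  have "finite B"
    using g by (auto simp: laurent_poly_def B_def elim: rev_finite_subset)
  moreover have "n \<in> B"
    using n \<open>g $$ n \<noteq> 0\<close> by (simp add: B_def)
  ultimately have M: "Max B \<in> B" and max: "\<And>m. m \<in> B \<Longrightarrow> m \<le> Max B"
    by (auto intro: Max_in)
  have "g $$ (Max B + 2) = 0"
  proof (rule ccontr)
    assume "g $$ (Max B + 2) \<noteq> 0"
    with M have "Max B + 2 \<in> B"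
      by (simp add: B_def)
    with max show False
      by fastforce
  qed
  then have "(g * Tlam lam) $$ (Max B + 2) \<noteq> 0"
    using M by (simp add: fls_nth_mult_Tlam B_def)
  with above M show False
    by (simp add: B_def)
qed

lemma laurent_poly_mult_Tlam_vanishing_below:
  assumes "lam \<noteq> 0" and g: "laurent_poly g" and below: "\<And>n. n < k \<Longrightarrow> (g * Tlam lam) $$ n = 0"
    and n: "n < k"
  shows "g $$ n = 0"
proof (rule ccontr)
  assume "g $$ n \<noteq> 0"
  define B where "B = {n. g $$ n \<noteq> 0 \<and> n < k}"
  have "finite B"
    using g by (auto simp: laurent_poly_def B_def elim: rev_finite_subset)
  moreover have "n \<in> B"
    using n \<open>g $$ n \<noteq> 0\<close> by (simp add: B_def)
  ultimately have M: "Min B \<in> B" and min: "\<And>m. m \<in> B \<Longrightarrow> Min B \<le> m"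
    by (auto intro: Min_in)
  have "g $$ (Min B - 2) = 0"
  proof (rule ccontr)
    assume "g $$ (Min B - 2) \<noteq> 0"
    with M have "Min B - 2 \<in> B"
      by (simp add: B_def)
    with min show False
      by fastforce
  qed
  then have "(g * Tlam lam) $$ Min B \<noteq> 0"
    using M \<open>lam \<noteq> 0\<close> by (simp add: fls_nth_mult_Tlam B_def)
  with below M show False
    by (simp add: B_def)
qed

lemma laurent_poly_mult_Tlam_eq_linear:
  assumes lam: "lam \<noteq> 0" and g: "laurent_poly g"
    and eq: "g * Tlam lam = fls_const a * fls_X ^ 3 + fls_const b * fls_X ^ 2 + fls_const (a * lam) * fls_X"
  shows "a = 0 \<and> b = 0"
proof -
  have rhs: "(g * Tlam lam) $$ n =
      (if n = 3 then a else 0) + (if n = 2 then b else 0) + (if n = 1 then a * lam else 0)" for n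
    unfolding eq by (simp add: fls_X_power_nth [of 1, simplified])
  have "g $$ n = 0" if "n \<noteq> 1" for n
  proof (cases "n < 1")
    case True
    then show ?thesis
      using laurent_poly_mult_Tlam_vanishing_below [OF lam g, of 1 n] by (simp add: rhs)
  next
    case False
    then show ?thesis
      using that laurent_poly_mult_Tlam_vanishing_above [OF g, of 3 lam n] by (simp add: rhs)
  qed
  then have "a = g $$ 1" "a * lam = - lam * g $$ 1" "b = 0"
    using rhs [of 3] rhs [of 1] rhs [of 2] by (simp_all add: fls_nth_mult_Tlam)
  with lam show ?thesis
    by (simp add: algebra_simps)
qed

lemma dcoef_slam_mult_Tlam: "lam \<noteq> 0 \<Longrightarrow> dcoef (slam lam) * Tlam lam = fls_X ^ 2"
  unfolding dcoef_slam Tlam_eq using wlam_nonzero [of lam] by (simp add: power2_eq_square)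

lemma sder_linear_mult_Tlam:
  assumes "lam \<noteq> 0"
  shows "sder (slam lam) [:b, a:] * Tlam lam =
    fls_const a * fls_X ^ 3 + fls_const b * fls_X ^ 2 + fls_const (a * lam) * fls_X"
proof -
  have "sder (slam lam) [:b, a:] * Tlam lam = (fls_const b + slam lam * fls_const a) * fls_X ^ 2"
    using dcoef_slam_mult_Tlam [OF assms] by (simp add: sder_def peval_pCons mult.assoc)
  also have "\<dots> = fls_const a * fls_X ^ 3 + fls_const b * fls_X ^ 2
      + fls_const (a * lam) * (fls_X * fls_X_inv) * fls_X"
    by (simp add: slam_def algebra_simps power2_eq_square power3_eq_cube)
  finally show ?thesis
    by (simp add: fls_X_mult_X_inv)
qed

lemma Lsub_eq_ksT:
  assumes lam: "lam \<noteq> 0"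
  shows "Lsub (slam lam) = ksT lam"
proof
  have "ksT lam \<subseteq> Witt"
    using Ocal_eq_ksT Ocal_subset_Witt by blast
  moreover have "ksT lam \<subseteq> Der_poly (slam lam)"
    unfolding ksT_def Der_poly_eq_range_sder using sder_slam_mult_quad [OF lam, symmetric] by blast
  ultimately show "ksT lam \<subseteq> Lsub (slam lam)"
    by (simp add: Lsub_def)
next
  show "Lsub (slam lam) \<subseteq> ksT lam"
  proof
    fix f assume "f \<in> Lsub (slam lam)"
    then obtain p where W: "f \<in> Witt" and p: "f = sder (slam lam) p"
      by (auto simp: Lsub_def Der_poly_eq_range_sder)
    define q r where "q = p div quad lam" and "r = p mod quad lam"
    have "degree r \<le> 1"
      using degree_mod_less [of "quad lam" p] by (auto simp: r_def)
    then have r: "r = [:coeff r 0, coeff r 1:]"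
      by (intro poly_eqI) (auto simp: coeff_pCons coeff_eq_0 split: nat.splits)
    have f: "f = peval q (slam lam) * Tlam lam + sder (slam lam) r"
      unfolding p q_def r_def
      by (subst div_mult_mod_eq [symmetric, of p "quad lam"])
        (simp only: sder_add sder_slam_mult_quad [OF lam])
    have "peval q (slam lam) * Tlam lam \<in> Witt"
      using ksTI Ocal_eq_ksT Ocal_subset_Witt by blast
    then have "sder (slam lam) r \<in> Witt"
      using fls_subspace_diff [OF fls_subspace_Witt W] f by force
    then have "coeff r 1 = 0 \<and> coeff r 0 = 0"
      using laurent_poly_mult_Tlam_eq_linear [OF lam] sder_linear_mult_Tlam [OF lam]
      by (subst (asm) r) (simp add: Witt_def)
    then have "f = peval q (slam lam) * Tlam lam"
      using f r by simp
    then show "f \<in> ksT lam"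
      by (rule ksTI)
  qed
qed

section \<open>The basis u_n\<close>

lemma monom_mult_pderiv_monom:
  "i + j \<ge> 1 \<Longrightarrow> monom 1 i * pderiv (monom 1 j) = monom (of_nat j :: 'a::field_char_0) (i + j - 1)"
  by (cases j) (simp_all add: pderiv_monom mult_monom)

lemma pderiv_bracket_monom_mult:
  fixes M :: "'a::field_char_0 poly"
  assumes "i + j \<ge> 1"
  shows "(monom 1 i * M) * pderiv (monom 1 j * M) - pderiv (monom 1 i * M) * (monom 1 j * M)
       = smult (of_nat j - of_nat i) (monom 1 (i + j - 1) * M ^ 2)"
proof -
  have "(monom 1 i * M) * pderiv (monom 1 j * M) - pderiv (monom 1 i * M) * (monom 1 j * M)
      = M ^ 2 * (monom 1 i * pderiv (monom 1 j) - monom 1 j * pderiv (monom 1 i))"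
    by (simp add: pderiv_mult power2_eq_square algebra_simps)
  also have "\<dots> = M ^ 2 * (monom (of_nat j) (i + j - 1) - monom (of_nat i) (i + j - 1))"
    using monom_mult_pderiv_monom [of i j] monom_mult_pderiv_monom [of j i] assms
    by (metis add.commute)
  also have "\<dots> = smult (of_nat j - of_nat i) (monom 1 (i + j - 1) * M ^ 2)"
  proof -
    have "M ^ 2 * monom c e = smult c (monom 1 e * M ^ 2)" for c e
      by (metis mult.commute mult_smult_left smult_monom mult.right_neutral)
    then show ?thesis
      by (simp only: right_diff_distrib smult_diff_left)
  qed
  finally show ?thesis .
qed

lemma monom_mult_square:
  fixes Q :: "'a::comm_ring_1 poly"
  assumes "monom 1 2 = Q + [:c:]"
  shows "monom 1 (k + 2) * Q - smult c (monom 1 k * Q) = monom 1 k * Q ^ 2"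
proof -
  have "monom 1 (k + 2) = monom 1 k * (Q + [:c:])"
    by (simp add: mult_monom flip: assms)
  then show ?thesis
    by (simp add: algebra_simps power2_eq_square)
qed

lemma monom_2_eq_quad: "monom 1 2 = quad lam + [:4 * lam:]"
  by (rule poly_eqI) (simp add: coeff_pCons split: nat.split)

lemma ugen_eq_sder: "ugen lam n = - sder (slam lam) (monom 1 (n - 1) * quad lam)"
  unfolding ugen_def sder_mult_quad peval_monom by (simp add: mult.assoc)

lemma ugen_eq:
  assumes "lam \<noteq> 0"
  shows "ugen lam n = - (slam lam ^ (n - 1) * Tlam lam)"
  unfolding ugen_eq_sder sder_slam_mult_quad [OF assms] peval_monom by simp

lemma kindep_ugen:
  assumes lam: "lam \<noteq> 0"
  shows "kindep (ugen lam)"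
  unfolding kindep_def
proof (intro allI impI ballI)
  fix S c n
  assume S: "finite S \<and> 0 \<notin> S \<and> (\<Sum>n\<in>S. fls_const (c n) * ugen lam n) = 0" and n: "n \<in> S"
  define P where "P = (\<Sum>k\<in>S. monom (c k) (k - 1))"
  have "peval P (slam lam) * Tlam lam = - (\<Sum>n\<in>S. fls_const (c n) * ugen lam n)"
    by (simp add: P_def ugen_eq [OF lam] peval_sum peval_monom sum_distrib_right sum_negf mult.assoc)
  then have "peval P (slam lam) = 0"
    using S Tlam_nonzero [OF lam] by simp
  then have "P = 0"
    by (simp add: peval_eq_0_iff fls_subdegree_slam lam)
  moreover have "coeff P (n - 1) = c n"
  proof -
    have "k - 1 = n - 1 \<longleftrightarrow> k = n" if "k \<in> S" for k
    proof -
      have "k \<noteq> 0" "n \<noteq> 0"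
        using that n S by metis+
      then show ?thesis
        by arith
    qed
    then have "coeff P (n - 1) = (\<Sum>k\<in>S. if k = n then c k else 0)"
      unfolding P_def coeff_sum coeff_monom by (intro sum.cong) auto
    with S n show ?thesis
      by simp
  qed
  ultimately show "c n = 0"
    by simp
qed

lemma kspan_ugen: "lam \<noteq> 0 \<Longrightarrow> kspan (ugen lam) = ksT lam"
proof
  assume lam: "lam \<noteq> 0"
  show "kspan (ugen lam) \<subseteq> ksT lam"
  proof (rule kspan_subset [OF fls_subspace_ksT])
    show "ugen lam n \<in> ksT lam" for n
      by (rule ksTI [of _ "monom (- 1) (n - 1)"]) (simp add: ugen_eq [OF lam] peval_monom)
  qed
  have "slam lam * f \<in> kspan (ugen lam)" if "f \<in> kspan (ugen lam)" for f
    using that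
  proof (rule kspan_mult_closed [rotated])
    fix n :: nat assume "n \<ge> 1"
    then have "slam lam * ugen lam n = ugen lam (Suc n)"
      by (simp add: ugen_eq [OF lam] power_eq_if)
    then show "slam lam * ugen lam n \<in> kspan (ugen lam)"
      by (simp add: kspan_gen)
  qed
  moreover have "Tlam lam \<in> kspan (ugen lam)"
    using fls_subspace_smult [OF fls_subspace_kspan kspan_gen [of 1 "ugen lam"], of "- 1"]
    by (simp add: ugen_eq [OF lam])
  ultimately show "ksT lam \<subseteq> kspan (ugen lam)"
    by (intro ksT_subset fls_subspace_kspan)
qed

lemma lie_ugen:
  assumes lam: "lam \<noteq> 0" and "n \<ge> 1" "m \<ge> 1"
  shows "lie (ugen lam n) (ugen lam m)
           = of_int (int n - int m) * (ugen lam (n + m) - fls_const (4 * lam) * ugen lam (n + m - 2))"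
proof (cases "n = m")
  case True
  then show ?thesis
    by (simp add: lie_def mult.commute)
next
  case False
  define k where "k = n + m - 3"
  have ij: "n - 1 + (m - 1) \<ge> 1" and k: "n - 1 + (m - 1) - 1 = k" "n + m - 1 = k + 2" "n + m - 2 - 1 = k"
    using assms False by (auto simp: k_def)
  let ?s = "slam lam"
  have "lie (ugen lam n) (ugen lam m)
      = lie (sder ?s (monom 1 (n - 1) * quad lam)) (sder ?s (monom 1 (m - 1) * quad lam))"
    unfolding ugen_eq_sder by (simp add: lie_def)
  also have "\<dots> = sder ?s (smult (of_nat (m - 1) - of_nat (n - 1)) (monom 1 k * quad lam ^ 2))"
    unfolding lie_sder [OF fls_deriv_slam_nonzero [OF lam]] pderiv_bracket_monom_mult [OF ij] k(1) ..
  also have "\<dots> = of_int (int n - int m) * - sder ?s (monom 1 k * quad lam ^ 2)"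
    using assms by (simp add: sder_smult fls_of_int of_nat_diff)
      (metis fls_const_uminus minus_diff_eq mult_minus_left)
  also have "\<dots> = of_int (int n - int m) * (ugen lam (n + m) - fls_const (4 * lam) * ugen lam (n + m - 2))"
  proof -
    define A B where "A = sder ?s (monom 1 (k + 2) * quad lam)" and "B = sder ?s (monom 1 k * quad lam)"
    have S: "sder ?s (monom 1 k * quad lam ^ 2) = A - fls_const (4 * lam) * B"
      unfolding A_def B_def monom_mult_square [OF monom_2_eq_quad, symmetric]
      by (simp only: sder_diff sder_smult)
    have U: "ugen lam (n + m) = - A" "ugen lam (n + m - 2) = - B"
      unfolding ugen_eq_sder k(2) A_def B_def
      using k(3) by simp_all
    show ?thesis
      unfolding S U by (simp add: algebra_simps)
  qed
  finally show ?thesis .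
qed

lemma Ocal_eq_image_sder:
  assumes "lam \<noteq> 0"
  shows "Ocal lam = sder (slam lam) ` range (\<lambda>p. p * quad lam)"
  unfolding Ocal_eq_ksT ksT_def image_image sder_slam_mult_quad [OF assms] by blast

lemma sder_to_poly_slam_iso:
  assumes lam: "lam \<noteq> 0"
  defines "\<Phi> \<equiv> sder_to_poly (slam lam)"
  shows "bij_betw \<Phi> (Ocal lam) {poly_fls (p * quad lam) | p. True}
           \<and> (\<forall>f\<in>Ocal lam. \<forall>g\<in>Ocal lam. \<Phi> (f + g) = \<Phi> f + \<Phi> g)
           \<and> (\<forall>c. \<forall>f\<in>Ocal lam. \<Phi> (fls_const c * f) = fls_const c * \<Phi> f)
           \<and> (\<forall>f\<in>Ocal lam. \<forall>g\<in>Ocal lam. \<Phi> (lie f g) = lie (\<Phi> f) (\<Phi> g))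
           \<and> (\<forall>p. \<Phi> (peval p (slam lam) * (slam lam ^ 2 - fls_const (4 * lam)) * dcoef (slam lam))
                   = poly_fls (p * quad lam))"
proof -
  note inj = inj_sder_slam [OF lam]
  have "{poly_fls (p * quad lam) | p. True} = poly_fls ` range (\<lambda>p. p * quad lam)"
    by blast
  moreover have "Ocal lam \<subseteq> range (sder (slam lam))"
    unfolding Ocal_eq_image_sder [OF lam] by blast
  ultimately show ?thesis
    unfolding \<Phi>_def Ocal_eq_image_sder [OF lam]
    using bij_betw_sder_to_poly [OF inj] sder_to_poly_add [OF inj] sder_to_poly_smult [OF inj]
      sder_to_poly_lie [OF inj fls_deriv_slam_nonzero [OF lam]]
    by (simp add: sder_to_poly_sder [OF inj] flip: sder_mult_quad)
qed

theorem theorem4p16: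
  fixes lam :: "'a::field_char_0"
  assumes "lam \<noteq> 0"
  shows
    "Ocal lam = Lsub (slam lam)
     \<and> Lsub (slam lam) = {peval p (slam lam) * (fls_X ^ 2 - fls_const lam) | p. True}
     \<and> {peval p (slam lam) * (fls_X ^ 2 - fls_const lam) | p. True}
         = {peval p (slam lam) * (slam lam ^ 2 - fls_const (4 * lam)) * dcoef (slam lam) | p. True}
     \<and> (\<exists>\<Phi>. bij_betw \<Phi> (Ocal lam) {poly_fls (p * [:- 4 * lam, 0, 1:]) | p. True}
           \<and> (\<forall>f\<in>Ocal lam. \<forall>g\<in>Ocal lam. \<Phi> (f + g) = \<Phi> f + \<Phi> g)
           \<and> (\<forall>c. \<forall>f\<in>Ocal lam. \<Phi> (fls_const c * f) = fls_const c * \<Phi> f)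
           \<and> (\<forall>f\<in>Ocal lam. \<forall>g\<in>Ocal lam. \<Phi> (lie f g) = lie (\<Phi> f) (\<Phi> g))
           \<and> (\<forall>p. \<Phi> (peval p (slam lam) * (slam lam ^ 2 - fls_const (4 * lam)) * dcoef (slam lam))
                   = poly_fls (p * [:- 4 * lam, 0, 1:])))
     \<and> (\<forall>n\<ge>1. ugen lam n = - (slam lam ^ (n - 1) * (fls_X ^ 2 - fls_const lam)))
     \<and> kindep (ugen lam) \<and> Ocal lam = kspan (ugen lam)
     \<and> (\<forall>n\<ge>1. \<forall>m\<ge>1. lie (ugen lam n) (ugen lam m)
           = (of_int (int n - int m)) * (ugen lam (n + m) - fls_const (4 * lam) * ugen lam (n + m - 2)))"
proof (intro conjI)
  show "Ocal lam = Lsub (slam lam)"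
    by (simp add: Ocal_eq_ksT Lsub_eq_ksT [OF assms])
  show "Lsub (slam lam) = {peval p (slam lam) * (fls_X ^ 2 - fls_const lam) | p. True}"
    unfolding Lsub_eq_ksT [OF assms] ksT_def Tlam_def ..
  show "{peval p (slam lam) * (fls_X ^ 2 - fls_const lam) | p. True}
      = {peval p (slam lam) * (slam lam ^ 2 - fls_const (4 * lam)) * dcoef (slam lam) | p. True}"
    by (simp only: mult.assoc slam_square_minus_mult_dcoef [OF assms] Tlam_def)
  show "\<forall>n\<ge>1. ugen lam n = - (slam lam ^ (n - 1) * (fls_X ^ 2 - fls_const lam))"
    by (simp add: ugen_eq [OF assms] Tlam_def)
  show "kindep (ugen lam)"
    by (rule kindep_ugen [OF assms])
  show "Ocal lam = kspan (ugen lam)"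
    by (simp add: Ocal_eq_ksT kspan_ugen [OF assms])
  show "\<forall>n\<ge>1. \<forall>m\<ge>1. lie (ugen lam n) (ugen lam m)
      = of_int (int n - int m) * (ugen lam (n + m) - fls_const (4 * lam) * ugen lam (n + m - 2))"
    using lie_ugen [OF assms] by blast
qed (use sder_to_poly_slam_iso [OF assms] in blast)

end
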